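(* Let $f:\Delta^{m-1}\times\Delta^{n-1}\to\mathbb{R}$ be continuous, and define $g:\Delta^{m-1}\times\Delta^{n-1}\to\mathbb{R}$ by $$g(x,y)=\sup\Big\{\mathbb{E}_{X\sim p}f(X,y)\ :\ p\in\mathcal{P}(\Delta^{m-1}),\ \mathbb{E}_{X\sim p}X=x\Big\}.$$ Then $g$ is continuous on $\Delta^{m-1}\times\Delta^{n-1}$.
   Context: $\Delta^{k-1}=\{z\in\mathbb{R}^k: z_j\ge0,\sum_j z_j=1\}$ is the standard simplex with its usual topology, and $\Delta^{m-1}\times\Delta^{n-1}$ has the product topology. $\mathcal{P}(\Delta^{m-1})$ is the space of Borel probability measures on $\Delta^{m-1}$ with the topology of weak convergence; $\mathbb{E}_{X\sim p}X$ is the (vector-valued) mean of $p$. *)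

theory Defs
  imports "HOL-Probability.Probability"
begin

definition std_simplex :: "(real ^ 'k) set" where
  "std_simplex = {z. (\<forall>j. 0 \<le> z $ j) \<and> (\<Sum>j\<in>UNIV. z $ j) = 1}"

definition prob_measures_on :: "'a::topological_space set \<Rightarrow> 'a measure set" where
  "prob_measures_on S = {p. prob_space p \<and> space p = S \<and> sets p = sets (restrict_space borel S)}"

definition concav_env ::
  "((real ^ 'm) \<times> (real ^ 'n) \<Rightarrow> real) \<Rightarrow> (real ^ 'm) \<times> (real ^ 'n) \<Rightarrow> real" where
  "concav_env f = (\<lambda>(x, y). Sup {(\<integral>X. f (X, y) \<partial>p) | p.
       p \<in> prob_measures_on std_simplex \<and> (\<integral>X. X \<partial>p) = x})"

end

theory Submission
  imports Defs
begin

text \<open>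
  Comparing the envelope at two points of the simplex reduces to transporting measures: for
  \<open>x, x'\<close> in the simplex there is a linear self-map \<open>A\<close> of the simplex with \<open>A x' = x\<close> which
  keeps at every vertex \<open>j\<close> the fraction \<open>min x\<^sub>j x'\<^sub>j / x'\<^sub>j\<close> of the mass and sends the rest
  to one fixed point of the simplex. It moves each \<open>X\<close> by at most twice the moved mass, a
  linear function of \<open>X\<close> whose mean under a measure with barycentre \<open>x'\<close> is
  \<open>\<Sum>\<^sub>j (x\<^sub>j - x'\<^sub>j)\<^sup>+ \<le> m |x - x'|\<close>. Pushing a measure with barycentre \<open>x'\<close> forward along \<open>A\<close>
  therefore yields one with barycentre \<open>x\<close> whose \<open>f\<close>-value drops by at most the modulus of
  continuity of \<open>f\<close> over a distance of order \<open>|x - x'| + |y - y'|\<close>. Writing that modulus as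
  \<open>e + L d\<close> for arbitrarily small \<open>e\<close> gives uniform continuity of the envelope.
\<close>

lemma std_simplexD:
  assumes "z \<in> std_simplex"
  shows "0 \<le> z $ j" and "(\<Sum>j\<in>UNIV. z $ j) = 1"
  using assms unfolding std_simplex_def by auto

lemma norm_le_one_std_simplex: "z \<in> std_simplex \<Longrightarrow> norm (z::real^'k) \<le> 1"
  using norm_le_l1_cart[of z] std_simplexD[of z] by simp

lemma compact_std_simplex: "compact (std_simplex :: (real^'k) set)"
proof -
  have "std_simplex = {z::real^'k. \<forall>j. 0 \<le> z $ j} \<inter> {z. (\<Sum>j\<in>UNIV. z $ j) = 1}"
    unfolding std_simplex_def by auto
  moreover have "closed {z::real^'k. \<forall>j. 0 \<le> z $ j}"
    by (intro closed_Collect_all closed_Collect_le continuous_intros continuous_on_component)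
  moreover have "closed {z::real^'k. (\<Sum>j\<in>UNIV. z $ j) = 1}"
    by (intro closed_Collect_eq continuous_intros continuous_on_component)
  ultimately have "closed (std_simplex :: (real^'k) set)"
    by (metis closed_Int)
  moreover have "bounded (std_simplex :: (real^'k) set)"
    using norm_le_one_std_simplex unfolding bounded_iff by blast
  ultimately show ?thesis
    by (simp add: compact_eq_bounded_closed)
qed

lemma dist_Pair_le: "dist (a, b) (c, d) \<le> dist a c + dist b d"
  using sqrt_sum_squares_le_sum_abs[of "dist a c" "dist b d"] by (simp add: dist_Pair_Pair)

lemma uniformly_continuous_on_approx_lipschitz:
  fixes f :: "'a::metric_space \<Rightarrow> real"
  assumes uc: "uniformly_continuous_on T f" and bd: "bounded (f ` T)" and e: "e > 0"
  obtains L where "L \<ge> 0" and "\<And>a b. a \<in> T \<Longrightarrow> b \<in> T \<Longrightarrow> \<bar>f a - f b\<bar> \<le> e + L * dist a b"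
proof -
  obtain B where B: "\<And>a. a \<in> T \<Longrightarrow> \<bar>f a\<bar> \<le> B"
    using bd unfolding bounded_iff by auto
  obtain d where d: "d > 0"
    and close: "\<And>a b. a \<in> T \<Longrightarrow> b \<in> T \<Longrightarrow> dist a b < d \<Longrightarrow> \<bar>f a - f b\<bar> < e"
    using uc e unfolding uniformly_continuous_on_def dist_real_def by metis
  define L where "L = 2 * \<bar>B\<bar> / d"
  have "\<bar>f a - f b\<bar> \<le> e + L * dist a b" if a: "a \<in> T" and b: "b \<in> T" for a b
  proof (cases "dist a b < d")
    case True
    then show ?thesis
      using close[OF a b] d by (simp add: L_def add_increasing2)
  next
    case False
    have "\<bar>f a - f b\<bar> \<le> 2 * \<bar>B\<bar>"
      using B[OF a] B[OF b] by linarith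
    also have "\<dots> = L * d"
      using d by (simp add: L_def)
    also have "\<dots> \<le> L * dist a b"
      using False d by (intro mult_left_mono) (auto simp: L_def)
    finally show ?thesis
      using e by linarith
  qed
  moreover have "L \<ge> 0"
    using d by (simp add: L_def)
  ultimately show ?thesis
    using that by blast
qed

lemma approx_lipschitz_imp_uniformly_continuous_on:
  fixes g :: "'a::metric_space \<Rightarrow> 'b::metric_space"
  assumes "\<And>e. e > 0 \<Longrightarrow> \<exists>L\<ge>0. \<forall>a\<in>T. \<forall>b\<in>T. dist (g a) (g b) \<le> e + L * dist a b"
  shows "uniformly_continuous_on T g"
  unfolding uniformly_continuous_on_def
proof (intro allI impI)
  fix \<epsilon> :: real
  assume "\<epsilon> > 0"
  then obtain L where L: "L \<ge> 0" and bnd: "\<forall>a\<in>T. \<forall>b\<in>T. dist (g a) (g b) \<le> \<epsilon> / 2 + L * dist a b"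
    using assms[of "\<epsilon> / 2"] by auto
  define \<delta> where "\<delta> = \<epsilon> / (2 * (L + 1))"
  have \<delta>: "\<delta> > 0"
    using L \<open>\<epsilon> > 0\<close> by (simp add: \<delta>_def)
  have "dist (g a) (g b) < \<epsilon>" if "a \<in> T" "b \<in> T" "dist a b < \<delta>" for a b
  proof -
    have "L * dist a b \<le> L * \<delta>"
      using that L by (intro mult_left_mono) auto
    also have "\<dots> < (L + 1) * \<delta>"
      using \<delta> by simp
    also have "\<dots> = \<epsilon> / 2"
      using L by (simp add: \<delta>_def field_simps)
    finally show ?thesis
      using bnd that by fastforce
  qed
  with \<delta> show "\<exists>\<delta>>0. \<forall>a\<in>T. \<forall>b\<in>T. dist b a < \<delta> \<longrightarrow> dist (g b) (g a) < \<epsilon>"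
    by blast
qed

lemma measurable_prob_measures_on:
  assumes "p \<in> prob_measures_on S" "continuous_on S h"
  shows "h \<in> borel_measurable p"
proof -
  have "sets p = sets (restrict_space borel S)"
    using assms(1) unfolding prob_measures_on_def by auto
  then show ?thesis
    using borel_measurable_continuous_on_restrict[OF assms(2)] measurable_cong_sets by blast
qed

lemma integrable_prob_measures_on:
  fixes h :: "'a::topological_space \<Rightarrow> 'b::{banach,second_countable_topology}"
  assumes p: "p \<in> prob_measures_on S" and S: "compact S" and h: "continuous_on S h"
  shows "integrable p h"
proof -
  have "prob_space p" and space: "space p = S"
    using p unfolding prob_measures_on_def by auto
  moreover obtain B where "\<And>z. z \<in> S \<Longrightarrow> norm (h z) \<le> B"
    using compact_imp_bounded[OF compact_continuous_image[OF h S]] unfolding bounded_iff by auto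
  ultimately show ?thesis
    using measurable_prob_measures_on[OF p h]
    by (intro finite_measure.integrable_const_bound[where B = B]) (auto simp: prob_space_def)
qed

lemma return_in_prob_measures_on:
  assumes "x \<in> S"
  shows "return (restrict_space borel S) x \<in> prob_measures_on S"
  using assms unfolding prob_measures_on_def by (auto intro!: prob_space_return simp: space_restrict_space)

lemma distr_in_prob_measures_on:
  assumes p: "p \<in> prob_measures_on S" and A: "continuous_on S A" "A ` S \<subseteq> S"
  shows "A \<in> p \<rightarrow>\<^sub>M restrict_space borel S"
    and "distr p (restrict_space borel S) A \<in> prob_measures_on S"
proof -
  have "sets p = sets (restrict_space borel S)" "prob_space p"
    using p unfolding prob_measures_on_def by auto
  moreover have "A \<in> restrict_space borel S \<rightarrow>\<^sub>M restrict_space borel S"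
    using A by (intro measurable_restrict_space2 borel_measurable_continuous_on_restrict)
      (auto simp: space_restrict_space)
  ultimately show A_meas: "A \<in> p \<rightarrow>\<^sub>M restrict_space borel S"
    using measurable_cong_sets by blast
  show "distr p (restrict_space borel S) A \<in> prob_measures_on S"
    using prob_space.prob_space_distr[OF \<open>prob_space p\<close> A_meas]
    unfolding prob_measures_on_def by (simp add: space_restrict_space)
qed

definition kept_fraction :: "real^'k \<Rightarrow> real^'k \<Rightarrow> real^'k" where
  "kept_fraction x x' = (\<chi> j. if x' $ j = 0 then 1 else min (x $ j) (x' $ j) / x' $ j)"

definition surplus :: "real^'k \<Rightarrow> real^'k \<Rightarrow> real^'k" where
  "surplus x x' = (\<chi> j. x $ j - min (x $ j) (x' $ j))"

text \<open>Without surplus the direction is irrelevant; \<open>x\<close> is just some point of the simplex.\<close>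

definition surplus_direction :: "real^'k \<Rightarrow> real^'k \<Rightarrow> real^'k" where
  "surplus_direction x x' =
     (if surplus x x' = 0 then x else (1 / (\<Sum>j\<in>UNIV. surplus x x' $ j)) *\<^sub>R surplus x x')"

definition moved_mass :: "real^'k \<Rightarrow> real^'k \<Rightarrow> real^'k \<Rightarrow> real" where
  "moved_mass x x' X = X \<bullet> (1 - kept_fraction x x')"

definition recentre :: "real^'k \<Rightarrow> real^'k \<Rightarrow> real^'k \<Rightarrow> real^'k" where
  "recentre x x' X = X * kept_fraction x x' + moved_mass x x' X *\<^sub>R surplus_direction x x'"

lemma kept_fraction_bounds:
  assumes "x \<in> std_simplex" "x' \<in> std_simplex"
  shows "0 \<le> kept_fraction x x' $ j" and "kept_fraction x x' $ j \<le> 1"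
    and "x' $ j * kept_fraction x x' $ j = min (x $ j) (x' $ j)"
  using std_simplexD(1)[OF assms(1), of j] std_simplexD(1)[OF assms(2), of j]
  by (auto simp: kept_fraction_def min_def divide_le_eq_1)

lemma surplus_nonneg: "0 \<le> surplus x x' $ j"
  by (simp add: surplus_def)

lemma sum_surplus_scaleR_direction:
  "(\<Sum>j\<in>UNIV. surplus x x' $ j) *\<^sub>R surplus_direction x x' = surplus x x'"
proof (cases "surplus x x' = 0")
  case False
  then have "(\<Sum>j\<in>UNIV. surplus x x' $ j) \<noteq> 0"
    using sum_nonneg_eq_0_iff[of UNIV "\<lambda>j. surplus x x' $ j"] surplus_nonneg
    by (auto simp: vec_eq_iff)
  then show ?thesis
    by (simp add: surplus_direction_def)
qed (simp add: surplus_direction_def)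

lemma surplus_direction_in_std_simplex:
  assumes "x \<in> std_simplex"
  shows "surplus_direction x x' \<in> std_simplex"
proof (cases "surplus x x' = 0")
  case False
  then have "(\<Sum>j\<in>UNIV. surplus x x' $ j) \<noteq> 0"
    using sum_nonneg_eq_0_iff[of UNIV "\<lambda>j. surplus x x' $ j"] surplus_nonneg
    by (auto simp: vec_eq_iff)
  moreover have "0 \<le> (\<Sum>j\<in>UNIV. surplus x x' $ j)"
    by (intro sum_nonneg surplus_nonneg)
  ultimately show ?thesis
    using False surplus_nonneg
    by (auto simp: std_simplex_def surplus_direction_def sum_divide_distrib[symmetric]
        intro!: divide_nonneg_nonneg)
qed (use assms in \<open>simp add: surplus_direction_def\<close>)

lemma sum_surplus_le_dist: "(\<Sum>j\<in>UNIV. surplus x x' $ j) \<le> real CARD('k) * dist x (x' :: real^'k)"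
proof -
  have "surplus x x' $ j \<le> dist x x'" for j
    using component_le_norm_cart[of "x - x'" j] by (simp add: surplus_def dist_norm)
  then show ?thesis
    using sum_mono[of UNIV "\<lambda>j. surplus x x' $ j" "\<lambda>_. dist x x'"] by simp
qed

lemma moved_mass_nonneg:
  assumes "x \<in> std_simplex" "x' \<in> std_simplex" "X \<in> std_simplex"
  shows "0 \<le> moved_mass x x' X"
  using kept_fraction_bounds[OF assms(1,2)] std_simplexD(1)[OF assms(3)]
  by (auto simp: moved_mass_def inner_vec_def intro!: sum_nonneg)

lemma moved_mass_self:
  assumes "x \<in> std_simplex" "x' \<in> std_simplex"
  shows "moved_mass x x' x' = (\<Sum>j\<in>UNIV. surplus x x' $ j)"
proof -
  have "moved_mass x x' x' = (\<Sum>j\<in>UNIV. x' $ j) - (\<Sum>j\<in>UNIV. min (x $ j) (x' $ j))"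
    using kept_fraction_bounds(3)[OF assms]
    by (simp add: moved_mass_def inner_vec_def algebra_simps sum_subtractf)
  also have "\<dots> = (\<Sum>j\<in>UNIV. x $ j) - (\<Sum>j\<in>UNIV. min (x $ j) (x' $ j))"
    using std_simplexD(2)[OF assms(1)] std_simplexD(2)[OF assms(2)] by simp
  finally show ?thesis
    by (simp add: surplus_def sum_subtractf)
qed

lemma recentre_self:
  assumes "x \<in> std_simplex" "x' \<in> std_simplex"
  shows "recentre x x' x' = x"
  unfolding recentre_def moved_mass_self[OF assms] sum_surplus_scaleR_direction
  using kept_fraction_bounds(3)[OF assms] by (simp add: vec_eq_iff surplus_def)

lemma recentre_in_std_simplex:
  assumes "x \<in> std_simplex" "x' \<in> std_simplex" "X \<in> std_simplex"
  shows "recentre x x' X \<in> std_simplex"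
proof -
  let ?r = "kept_fraction x x'" and ?w = "surplus_direction x x'" and ?t = "moved_mass x x' X"
  have w: "?w \<in> std_simplex"
    using surplus_direction_in_std_simplex[OF assms(1)] .
  have "(\<Sum>j\<in>UNIV. recentre x x' X $ j) = (\<Sum>j\<in>UNIV. X $ j * ?r $ j) + ?t * (\<Sum>j\<in>UNIV. ?w $ j)"
    by (simp add: recentre_def sum.distrib sum_distrib_left)
  also have "?t = (\<Sum>j\<in>UNIV. X $ j) - (\<Sum>j\<in>UNIV. X $ j * ?r $ j)"
    by (simp add: moved_mass_def inner_vec_def algebra_simps sum_subtractf)
  finally have "(\<Sum>j\<in>UNIV. recentre x x' X $ j) = 1"
    using std_simplexD(2)[OF w] std_simplexD(2)[OF assms(3)] by simp
  moreover have "0 \<le> recentre x x' X $ j" for j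
    using kept_fraction_bounds(1)[OF assms(1,2), of j] std_simplexD(1)[OF assms(3), of j]
      std_simplexD(1)[OF w, of j] moved_mass_nonneg[OF assms]
    by (simp add: recentre_def)
  ultimately show ?thesis
    unfolding std_simplex_def by simp
qed

lemma bounded_linear_moved_mass: "bounded_linear (moved_mass x x')"
  unfolding moved_mass_def[abs_def] by (rule bounded_linear_inner_left)

lemma bounded_linear_recentre:
  fixes x x' :: "real^'k"
  shows "bounded_linear (recentre x x')"
proof -
  have "linear (\<lambda>X::real^'k. X * kept_fraction x x')"
    by (intro linearI) (simp_all add: vec_eq_iff algebra_simps)
  then show ?thesis
    unfolding recentre_def[abs_def] linear_conv_bounded_linear
    by (intro bounded_linear_add bounded_linear_compose[OF bounded_linear_scaleR_left]
        bounded_linear_moved_mass)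
qed

lemma dist_recentre_le:
  assumes "x \<in> std_simplex" "x' \<in> std_simplex" "X \<in> std_simplex"
  shows "dist (recentre x x' X) X \<le> 2 * moved_mass x x' X"
proof -
  let ?t = "moved_mass x x' X" and ?v = "\<chi> j. X $ j * (1 - kept_fraction x x' $ j)"
  have "recentre x x' X - X = ?t *\<^sub>R surplus_direction x x' - ?v"
    by (simp add: recentre_def vec_eq_iff algebra_simps)
  moreover have "norm ?v \<le> ?t"
    using norm_le_l1_cart[of ?v] kept_fraction_bounds[OF assms(1,2)] std_simplexD(1)[OF assms(3)]
    by (simp add: moved_mass_def inner_vec_def)
  moreover have "norm (?t *\<^sub>R surplus_direction x x') \<le> ?t"
    using norm_le_one_std_simplex[OF surplus_direction_in_std_simplex[OF assms(1)]]
      moved_mass_nonneg[OF assms] by (simp add: mult_left_le)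
  ultimately show ?thesis
    using norm_triangle_ineq4[of "?t *\<^sub>R surplus_direction x x'" ?v] by (simp add: dist_norm)
qed

lemma integral_le_concav_env:
  fixes f :: "(real^'m) \<times> (real^'n) \<Rightarrow> real"
  assumes f: "continuous_on (std_simplex \<times> std_simplex) f" and y: "y \<in> std_simplex"
    and p: "p \<in> prob_measures_on std_simplex" and mean: "(\<integral>X. X \<partial>p) = x"
  shows "(\<integral>X. f (X, y) \<partial>p) \<le> concav_env f (x, y)"
proof -
  have compact: "compact (std_simplex \<times> std_simplex :: ((real^'m) \<times> (real^'n)) set)"
    by (intro compact_Times compact_std_simplex)
  obtain B where B: "\<And>a. a \<in> std_simplex \<times> std_simplex \<Longrightarrow> f a \<le> B"
    using compact_imp_bounded[OF compact_continuous_image[OF f compact]]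
    unfolding bounded_iff by (auto dest!: abs_le_D1)
  have cont: "continuous_on std_simplex (\<lambda>X. f (X, z))" if "z \<in> std_simplex" for z
    using that by (intro continuous_on_compose2[OF f]) (auto intro!: continuous_intros)
  have "(\<integral>X. f (X, z) \<partial>q) \<le> B" if "q \<in> prob_measures_on std_simplex" "z \<in> std_simplex" for q z
  proof -
    have "prob_space q" "space q = std_simplex"
      using that(1) unfolding prob_measures_on_def by auto
    then have "(\<integral>X. f (X, z) \<partial>q) \<le> (\<integral>X. B \<partial>q)"
      using that B
      by (intro integral_mono integrable_prob_measures_on[OF _ compact_std_simplex] cont)
        auto
    also have "\<dots> = B"
      using prob_space.prob_space[OF \<open>prob_space q\<close>] by simp
    finally show ?thesis .
  qed
  then have "bdd_above {(\<integral>X. f (X, y) \<partial>q) | q. q \<in> prob_measures_on std_simplex \<and> (\<integral>X. X \<partial>q) = x}"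
    using y by (auto simp: bdd_above_def)
  then show ?thesis
    unfolding concav_env_def using p mean by (auto intro!: cSup_upper)
qed

lemma integral_recentre_le_concav_env:
  fixes f :: "(real^'m) \<times> (real^'n) \<Rightarrow> real"
  assumes f: "continuous_on (std_simplex \<times> std_simplex) f"
    and x: "x \<in> std_simplex" and x': "x' \<in> std_simplex" and y: "y \<in> std_simplex"
    and p': "p' \<in> prob_measures_on std_simplex" and mean: "(\<integral>X. X \<partial>p') = x'"
  shows "(\<integral>X. f (recentre x x' X, y) \<partial>p') \<le> concav_env f (x, y)"
proof -
  let ?M = "restrict_space borel (std_simplex :: (real^'m) set)"
  define p where "p = distr p' ?M (recentre x x')"
  have cont: "continuous_on std_simplex (recentre x x')"
    by (rule linear_continuous_on[OF bounded_linear_recentre])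
  have maps: "recentre x x' ` std_simplex \<subseteq> std_simplex"
    using recentre_in_std_simplex[OF x x'] by blast
  note recentre_meas = distr_in_prob_measures_on(1)[OF p' cont maps]
  have "(\<integral>X. X \<partial>p) = (\<integral>X. recentre x x' X \<partial>p')"
    unfolding p_def
    by (intro integral_distr[OF recentre_meas] borel_measurable_continuous_on_restrict continuous_on_id)
  also have "\<dots> = x"
    using integral_bounded_linear[OF bounded_linear_recentre
        integrable_prob_measures_on[OF p' compact_std_simplex continuous_on_id]]
    by (simp add: mean recentre_self[OF x x'])
  finally have "(\<integral>X. f (X, y) \<partial>p) \<le> concav_env f (x, y)"
    using integral_le_concav_env[OF f y] distr_in_prob_measures_on(2)[OF p' cont maps]
    unfolding p_def by blast
  moreover have "(\<integral>X. f (X, y) \<partial>p) = (\<integral>X. f (recentre x x' X, y) \<partial>p')"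
    unfolding p_def using y
    by (intro integral_distr[OF recentre_meas] borel_measurable_continuous_on_restrict
        continuous_on_compose2[OF f]) (auto intro!: continuous_intros)
  ultimately show ?thesis
    by simp
qed

lemma integral_le_integral_recentre:
  fixes f :: "(real^'m) \<times> (real^'n) \<Rightarrow> real"
  assumes f: "continuous_on (std_simplex \<times> std_simplex) f" and L: "0 \<le> L"
    and bnd: "\<And>a b. a \<in> std_simplex \<times> std_simplex \<Longrightarrow> b \<in> std_simplex \<times> std_simplex \<Longrightarrow>
      \<bar>f a - f b\<bar> \<le> e + L * dist a b"
    and x: "x \<in> std_simplex" and x': "x' \<in> std_simplex"
    and y: "y \<in> std_simplex" and y': "y' \<in> std_simplex"
    and p': "p' \<in> prob_measures_on std_simplex" and mean: "(\<integral>X. X \<partial>p') = x'"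
  shows "(\<integral>X. f (X, y') \<partial>p') \<le>
    (\<integral>X. f (recentre x x' X, y) \<partial>p') + e + L * (dist y y' + 2 * real CARD('m) * dist x x')"
proof -
  let ?t = "moved_mass x x'" and ?c = "e + L * dist y y'"
  have ps: "prob_space p'" and space: "space p' = std_simplex"
    using p' unfolding prob_measures_on_def by auto
  have pointwise: "f (X, y') \<le> f (recentre x x' X, y) + ?c + 2 * L * ?t X" if "X \<in> space p'" for X
  proof -
    have X: "X \<in> std_simplex"
      using that space by simp
    have "\<bar>f (recentre x x' X, y) - f (X, y')\<bar> \<le> e + L * dist (recentre x x' X, y) (X, y')"
      using bnd recentre_in_std_simplex[OF x x' X] X y y' by blast
    also have "\<dots> \<le> e + L * (2 * ?t X + dist y y')"
      using dist_Pair_le[of "recentre x x' X" y X y'] dist_recentre_le[OF x x' X] L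
      by (intro add_left_mono mult_left_mono) auto
    finally show ?thesis
      by (simp add: algebra_simps)
  qed
  have cont_recentre: "continuous_on std_simplex (recentre x x')"
    by (rule linear_continuous_on[OF bounded_linear_recentre])
  have int_f: "integrable p' (\<lambda>X. f (X, y'))"
    using y' by (intro integrable_prob_measures_on[OF p' compact_std_simplex]
        continuous_on_compose2[OF f]) (auto intro!: continuous_intros)
  have int_f_recentre: "integrable p' (\<lambda>X. f (recentre x x' X, y))"
    using y recentre_in_std_simplex[OF x x']
    by (intro integrable_prob_measures_on[OF p' compact_std_simplex]
        continuous_on_compose2[OF f] continuous_intros cont_recentre) auto
  have int_t: "integrable p' ?t"
    by (intro integrable_prob_measures_on[OF p' compact_std_simplex]
        linear_continuous_on bounded_linear_moved_mass)
  have int_c: "integrable p' (\<lambda>_. ?c)"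
    using prob_space.finite_measure[OF ps] by (rule finite_measure.integrable_const)
  have "(\<integral>X. f (X, y') \<partial>p') \<le> (\<integral>X. f (recentre x x' X, y) + ?c + 2 * L * ?t X \<partial>p')"
    using pointwise int_f
      Bochner_Integration.integrable_add[OF Bochner_Integration.integrable_add[OF int_f_recentre int_c]
        integrable_mult_right[OF int_t]]
    by (rule integral_mono[rotated 2]) auto
  also have "\<dots> = (\<integral>X. f (recentre x x' X, y) \<partial>p') + ?c + 2 * L * ?t x'"
    using int_f_recentre int_t int_c prob_space.prob_space[OF ps]
      integral_bounded_linear[OF bounded_linear_moved_mass
        integrable_prob_measures_on[OF p' compact_std_simplex continuous_on_id]]
    by (simp add: mean Bochner_Integration.integral_add)
  also have "\<dots> \<le> (\<integral>X. f (recentre x x' X, y) \<partial>p') + ?c + 2 * L * (real CARD('m) * dist x x')"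
    using moved_mass_self[OF x x'] sum_surplus_le_dist[of x x'] L by (simp add: mult_left_mono)
  finally show ?thesis
    by (simp add: algebra_simps)
qed

lemma concav_env_le:
  fixes f :: "(real^'m) \<times> (real^'n) \<Rightarrow> real"
  assumes f: "continuous_on (std_simplex \<times> std_simplex) f" and L: "0 \<le> L"
    and bnd: "\<And>a b. a \<in> std_simplex \<times> std_simplex \<Longrightarrow> b \<in> std_simplex \<times> std_simplex \<Longrightarrow>
      \<bar>f a - f b\<bar> \<le> e + L * dist a b"
    and x: "x \<in> std_simplex" and x': "x' \<in> std_simplex"
    and y: "y \<in> std_simplex" and y': "y' \<in> std_simplex"
  shows "concav_env f (x', y') \<le>
    concav_env f (x, y) + e + L * (1 + 2 * real CARD('m)) * dist (x, y) (x', y')"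
proof -
  let ?V = "{(\<integral>X. f (X, y') \<partial>p') | p'. p' \<in> prob_measures_on std_simplex \<and> (\<integral>X. X \<partial>p') = x'}"
  let ?K = "concav_env f (x, y) + e + L * (dist y y' + 2 * real CARD('m) * dist x x')"
  let ?\<delta> = "return (restrict_space borel std_simplex) x'"
  have "(\<integral>X. X \<partial>?\<delta>) = x'"
    using x' by (intro integral_return borel_measurable_continuous_on_restrict continuous_on_id)
      (simp add: space_restrict_space)
  then have "?V \<noteq> {}"
    using return_in_prob_measures_on[OF x'] by blast
  moreover have "v \<le> ?K" if "v \<in> ?V" for v
    using that integral_le_integral_recentre[OF f L bnd x x' y y']
      integral_recentre_le_concav_env[OF f x x' y] by fastforce
  ultimately have "concav_env f (x', y') \<le> ?K"
    unfolding concav_env_def by (auto intro: cSup_least)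
  also have "\<dots> \<le> concav_env f (x, y) + e + L * (1 + 2 * real CARD('m)) * dist (x, y) (x', y')"
    using dist_fst_le[of "(x, y)" "(x', y')"] dist_snd_le[of "(x, y)" "(x', y')"] L
    by (auto simp: algebra_simps intro!: mult_left_mono add_mono)
  finally show ?thesis .
qed

theorem mainTheorem9:
  fixes f :: "(real ^ 'm) \<times> (real ^ 'n) \<Rightarrow> real"
  assumes "continuous_on (std_simplex \<times> std_simplex) f"
  shows "continuous_on (std_simplex \<times> std_simplex) (concav_env f)"
proof -
  let ?T = "std_simplex \<times> std_simplex :: ((real^'m) \<times> (real^'n)) set"
  have "compact ?T"
    by (intro compact_Times compact_std_simplex)
  then have uc: "uniformly_continuous_on ?T f" and bd: "bounded (f ` ?T)"
    using assms by (auto intro: compact_uniformly_continuous compact_imp_bounded compact_continuous_image)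
  have "uniformly_continuous_on ?T (concav_env f)"
  proof (rule approx_lipschitz_imp_uniformly_continuous_on)
    fix e :: real
    assume "e > 0"
    then obtain L where L: "L \<ge> 0"
      and bnd: "\<And>a b. a \<in> ?T \<Longrightarrow> b \<in> ?T \<Longrightarrow> \<bar>f a - f b\<bar> \<le> e + L * dist a b"
      using uniformly_continuous_on_approx_lipschitz[OF uc bd] by metis
    have "dist (concav_env f a) (concav_env f b) \<le> e + L * (1 + 2 * real CARD('m)) * dist a b"
      if "a \<in> ?T" "b \<in> ?T" for a b
      using that concav_env_le[OF assms L bnd] dist_commute[of a b]
      by (cases a, cases b) (fastforce simp: dist_real_def abs_le_iff)
    then show "\<exists>K\<ge>0. \<forall>a\<in>?T. \<forall>b\<in>?T. dist (concav_env f a) (concav_env f b) \<le> e + K * dist a b"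
      using L by (intro exI[of _ "L * (1 + 2 * real CARD('m))"]) auto
  qed
  then show ?thesis
    by (rule uniformly_continuous_imp_continuous)
qed

end
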